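(* Let $\eta$ be a generalized strategy in the game $\Gamma(F,G)$. Then there exists a cutoff strategy $\tilde\eta$ such that either $\eta$ is equivalent to $\tilde\eta$, or $\eta$ is strictly dominated by $\tilde\eta$, i.e., $\pi(\eta,\eta')<\pi(\tilde\eta,\eta')$ for every generalized strategy $\eta'$ of the opponent.
   Context: Game $\Gamma(F,G)$ without communication: player 1's type $u$ is drawn from a distribution on $[0,1]$ with continuous (atomless) CDF $F$ and density $f$; player 2's type independently from a CDF $G$ on $[0,1]$. Each chooses $L$ or $R$; a player of type $u$ gets $1-u$ if both choose $L$, $u$ if both choose $R$, and $0$ otherwise. A generalized strategy of player 1 is a measurable $\eta:[0,1]\to\Delta(\{L,R\})$, with $\eta_u(L)$ the probability type $u$ plays $L$; a generalized strategy $\eta'$ of player 2 is defined likewise on her types. $\pi(\eta,\eta')$ is player 1's ex-ante expected payoff (type $u\sim F$, opponent type $\sim G$). $\eta$ and $\tilde\eta$ are equivalent if $\int_0^1 f(u)\mathbf 1\{\eta(u)\ne\tilde\eta(u)\}du=0$. A cutoff strategy is one for which there is $x\in[0,1]$ with $\eta(u)=L$ for all $u<x$ and $\eta(u)=R$ for all $u>x$. *)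

theory Defs
  imports "HOL-Probability.Probability"
begin

text \<open>Player 1's type distribution: density f on [0,1] (CDF F u = integral of f over [0,u]).\<close>
definition type_density :: "(real \<Rightarrow> real) \<Rightarrow> bool" where
  "type_density f \<longleftrightarrow> f \<in> borel_measurable lborel \<and> (\<forall>u\<in>{0..1}. 0 \<le> f u)
     \<and> set_integrable lborel {0..1} f \<and> (LINT u:{0..1}|lborel. f u) = 1"

definition type_distribution :: "real measure \<Rightarrow> bool" where
  "type_distribution G \<longleftrightarrow> prob_space G \<and> sets G = sets borel \<and> measure G {0..1} = 1"

text \<open>Generalized strategy: eta u is the probability that type u plays L.\<close>
definition gen_strategy :: "(real \<Rightarrow> real) \<Rightarrow> bool" where
  "gen_strategy \<eta> \<longleftrightarrow> \<eta> \<in> borel_measurable (restrict_space borel {0..1})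
     \<and> (\<forall>u\<in>{0..1}. 0 \<le> \<eta> u \<and> \<eta> u \<le> 1)"

definition cutoff_strategy :: "(real \<Rightarrow> real) \<Rightarrow> bool" where
  "cutoff_strategy \<eta> \<longleftrightarrow> gen_strategy \<eta> \<and>
     (\<exists>x\<in>{0..1}. \<forall>u\<in>{0..1}. (u < x \<longrightarrow> \<eta> u = 1) \<and> (x < u \<longrightarrow> \<eta> u = 0))"

definition strat_equiv :: "(real \<Rightarrow> real) \<Rightarrow> (real \<Rightarrow> real) \<Rightarrow> (real \<Rightarrow> real) \<Rightarrow> bool" where
  "strat_equiv f \<eta> \<eta>' \<longleftrightarrow> (LINT u:{0..1}|lborel. f u * indicator {v. \<eta> v \<noteq> \<eta>' v} u) = 0"

definition opp_L :: "real measure \<Rightarrow> (real \<Rightarrow> real) \<Rightarrow> real" where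
  "opp_L G \<eta>' = (LINT v:{0..1}|G. \<eta>' v)"

definition payoff :: "(real \<Rightarrow> real) \<Rightarrow> real measure \<Rightarrow> (real \<Rightarrow> real) \<Rightarrow> (real \<Rightarrow> real) \<Rightarrow> real" where
  "payoff f G \<eta> \<eta>' = (LINT u:{0..1}|lborel. f u *
      (\<eta> u * opp_L G \<eta>' * (1 - u) + (1 - \<eta> u) * (1 - opp_L G \<eta>') * u))"

end

theory Submission
  imports Defs
begin

text \<open>Let m be the probability with which \<eta> plays L and choose the cutoff x with F(x) = m, so
  that the cutoff strategy c plays L with the same probability. Against an opponent playing L with
  probability p, type u gains p - u per unit of probability moved from R to L; since c and \<eta>
  put the same total mass on L, p may be replaced by x, and the payoff difference becomes the
  integral of f(u) (c(u) - \<eta>(u)) (x - u). This integrand is pointwise nonnegative, so c is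
  strictly better against every opponent unless the integrand vanishes almost everywhere, i.e.
  unless \<eta> = c almost everywhere.\<close>

lemma set_integral_nonneg_on:
  fixes f :: "'a \<Rightarrow> real"
  assumes "\<And>x. x \<in> A \<Longrightarrow> 0 \<le> f x"
  shows "0 \<le> (LINT x:A|M. f x)"
  unfolding set_lebesgue_integral_def
  using assms by (intro Bochner_Integration.integral_nonneg) (simp add: indicator_def)

lemma set_integrable_mult_bounded:
  fixes f h :: "real \<Rightarrow> real"
  assumes f: "set_integrable lborel A f" "f \<in> borel_measurable borel" and A: "A \<in> sets borel"
    and h: "h \<in> borel_measurable (restrict_space borel A)"
    and bound: "\<And>u. u \<in> A \<Longrightarrow> \<bar>h u\<bar> \<le> C"
  shows "set_integrable lborel A (\<lambda>u. f u * h u)"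
proof (rule set_integrable_bound)
  show "set_integrable lborel A (\<lambda>u. C * f u)"
    using f(1) by simp
  have "(\<lambda>u. indicator A u *\<^sub>R h u) \<in> borel_measurable borel"
    using h A by (subst (asm) borel_measurable_restrict_space_iff) auto
  then show "set_borel_measurable lborel A (\<lambda>u. f u * h u)"
    using f(2) unfolding set_borel_measurable_def by (simp add: mult.left_commute)
  show "AE u in lborel. u \<in> A \<longrightarrow> norm (f u * h u) \<le> norm (C * f u)"
  proof (rule AE_I2, rule impI)
    fix u assume "u \<in> A"
    then have "\<bar>f u\<bar> * \<bar>h u\<bar> \<le> \<bar>f u\<bar> * \<bar>C\<bar>"
      using bound by (intro mult_left_mono) force+
    then show "norm (f u * h u) \<le> norm (C * f u)"
      by (simp add: abs_mult mult.commute)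
  qed
qed

lemma type_density_set_integrable_mult:
  assumes "type_density f" and "h \<in> borel_measurable (restrict_space borel {0..1})"
    and "\<And>u. u \<in> {0..1} \<Longrightarrow> \<bar>h u\<bar> \<le> C"
  shows "set_integrable lborel {0..1} (\<lambda>u. f u * h u)"
  using assms set_integrable_mult_bounded[of "{0..1}" f h C]
  by (simp add: type_density_def)

lemma type_density_set_integrable_strategy:
  assumes "type_density f" and "gen_strategy \<eta>"
  shows "set_integrable lborel {0..1} (\<lambda>u. f u * \<eta> u)"
  using assms by (intro type_density_set_integrable_mult[of f \<eta> 1]) (auto simp: gen_strategy_def)

definition cutoff_at :: "real \<Rightarrow> real \<Rightarrow> real" where
  "cutoff_at x u = (if u \<le> x then 1 else 0)"

lemma borel_measurable_cutoff_at [measurable]: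
  "cutoff_at x \<in> borel_measurable (restrict_space borel {0..1})"
  unfolding cutoff_at_def by (rule measurable_restrict_space1) measurable

lemma gen_strategy_cutoff_at: "gen_strategy (cutoff_at x)"
  by (simp add: gen_strategy_def cutoff_at_def)

lemma cutoff_strategy_cutoff_at:
  assumes "x \<in> {0..1}"
  shows "cutoff_strategy (cutoff_at x)"
  unfolding cutoff_strategy_def
  using assms by (auto simp: gen_strategy_cutoff_at cutoff_at_def intro!: bexI[of _ x])

lemma integral_type_density_cutoff_at:
  assumes f: "type_density f" and x: "x \<in> {0..1}"
  shows "(LINT u:{0..1}|lborel. f u * cutoff_at x u) = integral {0..x} f"
proof -
  have "set_integrable lborel {0..1} f"
    using f by (simp add: type_density_def)
  then have "set_integrable lborel {0..x} f"
    by (rule set_integrable_subset) (use x in auto)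
  have "(LINT u:{0..1}|lborel. f u * cutoff_at x u) = (LINT u:{0..x}|lborel. f u)"
    unfolding set_lebesgue_integral_def
    by (rule Bochner_Integration.integral_cong) (use x in \<open>auto simp: indicator_def cutoff_at_def\<close>)
  also have "\<dots> = integral {0..x} f"
    by (rule set_borel_integral_eq_integral(2)) fact
  finally show ?thesis .
qed

lemma integral_type_density_strategy_bounds:
  assumes f: "type_density f" and \<eta>: "gen_strategy \<eta>"
  shows "0 \<le> (LINT u:{0..1}|lborel. f u * \<eta> u)" and "(LINT u:{0..1}|lborel. f u * \<eta> u) \<le> 1"
proof -
  have f_nonneg: "\<And>u. u \<in> {0..1} \<Longrightarrow> 0 \<le> f u" and f_int: "set_integrable lborel {0..1} f"
    and f_total: "(LINT u:{0..1}|lborel. f u) = 1"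
    using f by (auto simp: type_density_def)
  have \<eta>_bounds: "\<And>u. u \<in> {0..1} \<Longrightarrow> 0 \<le> \<eta> u \<and> \<eta> u \<le> 1"
    using \<eta> by (auto simp: gen_strategy_def)
  show "0 \<le> (LINT u:{0..1}|lborel. f u * \<eta> u)"
    using f_nonneg \<eta>_bounds by (intro set_integral_nonneg_on mult_nonneg_nonneg) simp_all
  have "f u * \<eta> u \<le> f u" if "u \<in> {0..1}" for u
    using that f_nonneg \<eta>_bounds by (simp add: mult_left_le)
  then have "(LINT u:{0..1}|lborel. f u * \<eta> u) \<le> (LINT u:{0..1}|lborel. f u)"
    by (rule set_integral_mono[OF type_density_set_integrable_strategy[OF f \<eta>] f_int])
  then show "(LINT u:{0..1}|lborel. f u * \<eta> u) \<le> 1"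
    using f_total by simp
qed

lemma exists_cutoff_at_same_mass:
  assumes f: "type_density f" and \<eta>: "gen_strategy \<eta>"
  obtains x where "x \<in> {0..1}"
    and "(LINT u:{0..1}|lborel. f u * cutoff_at x u) = (LINT u:{0..1}|lborel. f u * \<eta> u)"
proof -
  define F where "F x = integral {0..x} f" for x
  have f_int: "f integrable_on {0..1}" and F1: "F 1 = 1"
    using f set_borel_integral_eq_integral[of "{0..1}" f]
    by (auto simp: type_density_def F_def)
  have "continuous_on {0..1} F"
    unfolding F_def by (rule indefinite_integral_continuous_1[OF f_int])
  then obtain x where "x \<in> {0..1}" "F x = (LINT u:{0..1}|lborel. f u * \<eta> u)"
    using IVT'[of F 0 "LINT u:{0..1}|lborel. f u * \<eta> u" 1] F1
      integral_type_density_strategy_bounds[OF f \<eta>] by (auto simp: F_def)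
  with that show thesis
    using integral_type_density_cutoff_at[OF f] by (simp add: F_def)
qed

lemma set_integrable_strategy_diff:
  assumes f: "type_density f" and "gen_strategy \<eta>\<^sub>1" "gen_strategy \<eta>\<^sub>2"
  shows "set_integrable lborel {0..1} (\<lambda>u. f u * ((\<eta>\<^sub>1 u - \<eta>\<^sub>2 u) * (x - u)))"
proof (rule type_density_set_integrable_mult[OF f _, of _ "\<bar>x\<bar> + 1"])
  have [measurable]: "\<eta>\<^sub>1 \<in> borel_measurable (restrict_space borel {0..1})"
    "\<eta>\<^sub>2 \<in> borel_measurable (restrict_space borel {0..1})"
    "(\<lambda>u. u) \<in> borel_measurable (restrict_space borel {0..1})"
    using assms by (auto simp: gen_strategy_def intro: measurable_restrict_space1)
  show "(\<lambda>u. (\<eta>\<^sub>1 u - \<eta>\<^sub>2 u) * (x - u)) \<in> borel_measurable (restrict_space borel {0..1})"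
    by measurable
  fix u :: real assume u: "u \<in> {0..1}"
  have "0 \<le> \<eta>\<^sub>1 u" "\<eta>\<^sub>1 u \<le> 1" "0 \<le> \<eta>\<^sub>2 u" "\<eta>\<^sub>2 u \<le> 1"
    using assms u by (auto simp: gen_strategy_def)
  then have "\<bar>\<eta>\<^sub>1 u - \<eta>\<^sub>2 u\<bar> * \<bar>x - u\<bar> \<le> 1 * (\<bar>x\<bar> + 1)"
    using u by (intro mult_mono) auto
  then show "\<bar>(\<eta>\<^sub>1 u - \<eta>\<^sub>2 u) * (x - u)\<bar> \<le> \<bar>x\<bar> + 1"
    by (simp add: abs_mult)
qed

lemma set_integrable_payoff_integrand:
  assumes f: "type_density f" and \<eta>: "gen_strategy \<eta>"
  shows "set_integrable lborel {0..1}
    (\<lambda>u. f u * (\<eta> u * p * (1 - u) + (1 - \<eta> u) * (1 - p) * u))"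
proof (rule type_density_set_integrable_mult[OF f _, of _ "1 + 2 * \<bar>p\<bar>"])
  have [measurable]: "\<eta> \<in> borel_measurable (restrict_space borel {0..1})"
    "(\<lambda>u. u) \<in> borel_measurable (restrict_space borel {0..1})"
    using \<eta> by (auto simp: gen_strategy_def intro: measurable_restrict_space1)
  show "(\<lambda>u. \<eta> u * p * (1 - u) + (1 - \<eta> u) * (1 - p) * u)
      \<in> borel_measurable (restrict_space borel {0..1})"
    by measurable
  fix u :: real assume u: "u \<in> {0..1}"
  have "0 \<le> \<eta> u" "\<eta> u \<le> 1"
    using \<eta> u by (auto simp: gen_strategy_def)
  then have weights: "0 \<le> \<eta> u * (1 - u)" "\<eta> u * (1 - u) \<le> 1"
    "0 \<le> (1 - \<eta> u) * u" "(1 - \<eta> u) * u \<le> 1"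
    using u by (auto intro: mult_le_one)
  have "\<eta> u * p * (1 - u) + (1 - \<eta> u) * (1 - p) * u
      = (\<eta> u * (1 - u)) * p + ((1 - \<eta> u) * u) * (1 - p)"
    by (simp add: algebra_simps)
  then have "\<bar>\<eta> u * p * (1 - u) + (1 - \<eta> u) * (1 - p) * u\<bar>
      \<le> \<bar>(\<eta> u * (1 - u)) * p\<bar> + \<bar>((1 - \<eta> u) * u) * (1 - p)\<bar>"
    by (simp only: abs_triangle_ineq)
  also have "\<dots> \<le> \<bar>p\<bar> + \<bar>1 - p\<bar>"
    using weights by (intro add_mono) (simp_all add: abs_mult mult_left_le_one_le)
  also have "\<dots> \<le> 1 + 2 * \<bar>p\<bar>"
    by arith
  finally show "\<bar>\<eta> u * p * (1 - u) + (1 - \<eta> u) * (1 - p) * u\<bar> \<le> 1 + 2 * \<bar>p\<bar>" .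
qed

lemma payoff_diff_same_mass:
  assumes f: "type_density f" and \<eta>\<^sub>1: "gen_strategy \<eta>\<^sub>1" and \<eta>\<^sub>2: "gen_strategy \<eta>\<^sub>2"
    and same_mass: "(LINT u:{0..1}|lborel. f u * \<eta>\<^sub>1 u) = (LINT u:{0..1}|lborel. f u * \<eta>\<^sub>2 u)"
  shows "payoff f G \<eta>\<^sub>1 \<eta>' - payoff f G \<eta>\<^sub>2 \<eta>'
    = (LINT u:{0..1}|lborel. f u * ((\<eta>\<^sub>1 u - \<eta>\<^sub>2 u) * (x - u)))"
proof -
  define p where "p = opp_L G \<eta>'"
  note mass_int = type_density_set_integrable_strategy[OF f]
  have "payoff f G \<eta>\<^sub>1 \<eta>' - payoff f G \<eta>\<^sub>2 \<eta>'
      = (LINT u:{0..1}|lborel. f u * (\<eta>\<^sub>1 u * p * (1 - u) + (1 - \<eta>\<^sub>1 u) * (1 - p) * u)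
          - f u * (\<eta>\<^sub>2 u * p * (1 - u) + (1 - \<eta>\<^sub>2 u) * (1 - p) * u))"
    unfolding payoff_def p_def[symmetric]
    using set_integral_diff(2)[OF set_integrable_payoff_integrand[OF f \<eta>\<^sub>1]
        set_integrable_payoff_integrand[OF f \<eta>\<^sub>2]] by simp
  also have "\<dots> = (LINT u:{0..1}|lborel. f u * ((\<eta>\<^sub>1 u - \<eta>\<^sub>2 u) * (x - u))
      + (p - x) * (f u * \<eta>\<^sub>1 u - f u * \<eta>\<^sub>2 u))"
    by (rule set_lebesgue_integral_cong) (auto simp: algebra_simps)
  also have "\<dots> = (LINT u:{0..1}|lborel. f u * ((\<eta>\<^sub>1 u - \<eta>\<^sub>2 u) * (x - u)))
      + (p - x) * ((LINT u:{0..1}|lborel. f u * \<eta>\<^sub>1 u) - (LINT u:{0..1}|lborel. f u * \<eta>\<^sub>2 u))"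
    using set_integrable_strategy_diff[OF f \<eta>\<^sub>1 \<eta>\<^sub>2] mass_int[OF \<eta>\<^sub>1] mass_int[OF \<eta>\<^sub>2]
    by (simp add: set_integral_add set_integral_diff)
  finally show ?thesis
    using same_mass by simp
qed

lemma cutoff_at_gain_nonneg:
  assumes "type_density f" and "gen_strategy \<eta>" and "u \<in> {0..1}"
  shows "0 \<le> f u * ((cutoff_at x u - \<eta> u) * (x - u))"
proof -
  have "0 \<le> f u" "0 \<le> \<eta> u" "\<eta> u \<le> 1"
    using assms by (auto simp: type_density_def gen_strategy_def)
  moreover have "0 \<le> (cutoff_at x u - \<eta> u) * (x - u)"
    using \<open>0 \<le> \<eta> u\<close> \<open>\<eta> u \<le> 1\<close>
    by (cases "u \<le> x") (auto simp: cutoff_at_def mult_nonneg_nonpos)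
  ultimately show ?thesis
    by simp
qed

lemma strat_equiv_cutoff_at_if_gain_zero:
  assumes f: "type_density f" and \<eta>: "gen_strategy \<eta>"
    and gain: "(LINT u:{0..1}|lborel. f u * ((cutoff_at x u - \<eta> u) * (x - u))) = 0"
  shows "strat_equiv f \<eta> (cutoff_at x)"
proof -
  define g where "g = (\<lambda>u. indicator {0..1} u *\<^sub>R (f u * ((cutoff_at x u - \<eta> u) * (x - u))))"
  have g_nonneg: "0 \<le> g u" for u
    using cutoff_at_gain_nonneg[OF f \<eta>] by (simp add: g_def indicator_def)
  have g_int: "integrable lborel g"
    using set_integrable_strategy_diff[OF f gen_strategy_cutoff_at \<eta>]
    by (simp add: g_def set_integrable_def)
  have "integral\<^sup>L lborel g = 0"
    using gain by (simp add: g_def set_lebesgue_integral_def)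
  then have "AE u in lborel. g u = 0"
    using integral_nonneg_eq_0_iff_AE[OF g_int AE_I2[OF g_nonneg]] by simp
  then have "AE u in lborel. g u = 0 \<and> u \<noteq> x"
    using AE_lborel_singleton[of x] by eventually_elim auto
  then have "AE u in lborel. indicator {0..1} u *\<^sub>R (f u * indicator {v. \<eta> v \<noteq> cutoff_at x v} u) = 0"
  proof eventually_elim
    case (elim u)
    show ?case
    proof (cases "u \<in> {0..1} \<and> \<eta> u \<noteq> cutoff_at x u")
      case True
      with elim have "f u = 0"
        by (auto simp: g_def)
      then show ?thesis
        by simp
    qed auto
  qed
  then show ?thesis
    unfolding strat_equiv_def set_lebesgue_integral_def by (rule integral_eq_zero_AE)
qed

theorem lemmaA1:
  fixes f :: "real \<Rightarrow> real" and G :: "real measure" and \<eta> :: "real \<Rightarrow> real"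
  assumes "type_density f" and "type_distribution G" and "gen_strategy \<eta>"
  shows "\<exists>\<eta>c. cutoff_strategy \<eta>c \<and>
           (strat_equiv f \<eta> \<eta>c \<or>
            (\<forall>\<eta>'. gen_strategy \<eta>' \<longrightarrow> payoff f G \<eta> \<eta>' < payoff f G \<eta>c \<eta>'))"
proof -
  note f = assms(1) and \<eta> = assms(3)
  obtain x where x: "x \<in> {0..1}"
    and same_mass: "(LINT u:{0..1}|lborel. f u * cutoff_at x u) = (LINT u:{0..1}|lborel. f u * \<eta> u)"
    using exists_cutoff_at_same_mass[OF f \<eta>] .
  define gain where "gain = (LINT u:{0..1}|lborel. f u * ((cutoff_at x u - \<eta> u) * (x - u)))"
  have "0 \<le> gain"
    unfolding gain_def using cutoff_at_gain_nonneg[OF f \<eta>] by (rule set_integral_nonneg_on)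
  have payoff_gain: "payoff f G (cutoff_at x) \<eta>' - payoff f G \<eta> \<eta>' = gain" for \<eta>'
    unfolding gain_def using payoff_diff_same_mass[OF f gen_strategy_cutoff_at \<eta> same_mass] .
  have dominance: "strat_equiv f \<eta> (cutoff_at x) \<or>
      (\<forall>\<eta>'. gen_strategy \<eta>' \<longrightarrow> payoff f G \<eta> \<eta>' < payoff f G (cutoff_at x) \<eta>')"
  proof (cases "gain = 0")
    case True
    then show ?thesis
      unfolding gain_def using strat_equiv_cutoff_at_if_gain_zero[OF f \<eta>] by blast
  next
    case False
    with \<open>0 \<le> gain\<close> have "0 < gain"
      by simp
    then show ?thesis
      using payoff_gain by (metis diff_gt_0_iff_gt)
  qed
  show ?thesis
    by (rule exI[of _ "cutoff_at x"], rule conjI) (fact cutoff_strategy_cutoff_at[OF x], fact dominance)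
qed

end
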